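(* Let $\Delta\geq2$ be an integer and $n\geq2\Delta^4$, and let $G$ be a graph on $n$ vertices with $\Delta(G)\leq\Delta$. Then there exists a graph $\bar G$ with $V(\bar G)=V(G)$ and $E(\bar G)\supseteq E(G)$ such that $d_{\bar G}(v)\in\{\Delta,\Delta+1\}$ for every vertex $v$ and $\Delta_2(\bar G)\leq\max\{\Delta_2(G),1\}$.
   Context: $\Delta(G)$ is the maximum degree; $\Delta_2(G)$ is the maximum over distinct vertex pairs of the number of common neighbours. *)

theory Defs
  imports Main
begin

definition sgraph :: "'a set \<Rightarrow> 'a set set \<Rightarrow> bool" where
  "sgraph V E \<longleftrightarrow> finite V \<and> (\<forall>e\<in>E. e \<subseteq> V \<and> card e = 2)"

definition nbhd :: "'a set set \<Rightarrow> 'a \<Rightarrow> 'a set" where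
  "nbhd E v = {u. {u, v} \<in> E}"

definition degree :: "'a set set \<Rightarrow> 'a \<Rightarrow> nat" where
  "degree E v = card (nbhd E v)"

definition max_degree :: "'a set \<Rightarrow> 'a set set \<Rightarrow> nat" where
  "max_degree V E = Max (insert 0 (degree E ` V))"

definition max_codegree :: "'a set \<Rightarrow> 'a set set \<Rightarrow> nat" where
  "max_codegree V E =
     Max (insert 0 {card (nbhd E u \<inter> nbhd E v) | u v. u \<in> V \<and> v \<in> V \<and> u \<noteq> v})"

end

theory Submission
  imports Defs
begin

(* Greedy completion. While some vertex u has degree below \<Delta>, join it to a vertex v that
   is neither u, nor a neighbour of u, nor the end of a path u a w v with w \<noteq> u. Such an edge
   only creates common neighbours for pairs that had none, so every codegree stays at most
   max (\<Delta>\<^sub>2(G)) 1. While all degrees are at most \<Delta>+1, at most \<Delta>\<^sup>3 vertices are blocked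
   for u. If some unblocked v has degree below \<Delta>, it is used and no vertex reaches degree
   \<Delta>+1. Otherwise all deficient vertices are blocked, so the total deficit is at most \<Delta>\<^sup>4, and
   v may be any unblocked vertex of degree \<Delta>. Hence, once a vertex of degree \<Delta>+1 exists, the
   number of such vertices plus the deficit stays at most \<Delta>\<^sup>4, and n \<ge> 2\<Delta>\<^sup>4 always leaves
   an unblocked vertex of degree at most \<Delta>. The argument needs no lower bound on \<Delta>. *)

lemma nbhd_sym: "u \<in> nbhd E x \<longleftrightarrow> x \<in> nbhd E u"
  unfolding nbhd_def by (simp add: insert_commute)

lemma sgraph_nbhd_subset: "sgraph V E \<Longrightarrow> nbhd E x \<subseteq> V"
  unfolding sgraph_def nbhd_def by auto

lemma sgraph_finite_nbhd: "sgraph V E \<Longrightarrow> finite (nbhd E x)"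
  using sgraph_nbhd_subset finite_subset unfolding sgraph_def by metis

lemma sgraph_nbhd_outside: "sgraph V E \<Longrightarrow> x \<notin> V \<Longrightarrow> nbhd E x = {}"
  using sgraph_nbhd_subset nbhd_sym by fast

lemma sgraph_not_in_nbhd_self: "sgraph V E \<Longrightarrow> x \<notin> nbhd E x"
  unfolding sgraph_def nbhd_def by fastforce

lemma sgraph_degree_le: "sgraph V E \<Longrightarrow> \<forall>x\<in>V. degree E x \<le> k \<Longrightarrow> degree E x \<le> k"
  by (cases "x \<in> V") (auto simp: degree_def sgraph_nbhd_outside)

lemma max_degree_le_iff:
  "finite V \<Longrightarrow> max_degree V E \<le> k \<longleftrightarrow> (\<forall>x\<in>V. degree E x \<le> k)"
  unfolding max_degree_def by auto

lemma max_codegree_le_iff: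
  assumes "finite V"
  shows "max_codegree V E \<le> c \<longleftrightarrow>
    (\<forall>x\<in>V. \<forall>y\<in>V. x \<noteq> y \<longrightarrow> card (nbhd E x \<inter> nbhd E y) \<le> c)"
proof -
  have "{card (nbhd E x \<inter> nbhd E y) | x y. x \<in> V \<and> y \<in> V \<and> x \<noteq> y}
      \<subseteq> (\<lambda>(x, y). card (nbhd E x \<inter> nbhd E y)) ` (V \<times> V)"
    by auto
  then have "finite {card (nbhd E x \<inter> nbhd E y) | x y. x \<in> V \<and> y \<in> V \<and> x \<noteq> y}"
    using assms by (meson finite_SigmaI finite_imageI finite_subset)
  then show ?thesis
    unfolding max_codegree_def by auto
qed

lemma nbhd_insert_edge:
  "nbhd (insert {u, v} E) x =
     nbhd E x \<union> (if x = u then {v} else {}) \<union> (if x = v then {u} else {})"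
  unfolding nbhd_def by (auto simp: doubleton_eq_iff)

lemma sgraph_insert_edge:
  "sgraph V E \<Longrightarrow> u \<in> V \<Longrightarrow> v \<in> V \<Longrightarrow> u \<noteq> v \<Longrightarrow> sgraph V (insert {u, v} E)"
  unfolding sgraph_def by auto

lemma degree_insert_edge:
  assumes "sgraph V E" and "u \<noteq> v" and "v \<notin> nbhd E u"
  shows "degree (insert {u, v} E) x = (if x = u \<or> x = v then degree E x + 1 else degree E x)"
  using assms nbhd_sym[of v E u] sgraph_finite_nbhd[OF assms(1)]
  by (auto simp: degree_def nbhd_insert_edge)

text \<open>The vertices v for which the edge uv would be a loop or a multiple edge, or would close
  a path u a w v with w \<noteq> u and thereby give u and w a second common neighbour.\<close>
definition blocked :: "'a set set \<Rightarrow> 'a \<Rightarrow> 'a set" where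
  "blocked E u = insert u (nbhd E u \<union> (\<Union>a\<in>nbhd E u. \<Union>w\<in>nbhd E a - {u}. nbhd E w))"

lemma blocked_sym_imp:
  assumes "v \<in> blocked E u"
  shows "u \<in> blocked E v"
proof -
  consider "v = u" | "v \<in> nbhd E u"
    | a w where "a \<in> nbhd E u" "w \<in> nbhd E a" "w \<noteq> u" "v \<in> nbhd E w"
    using assms unfolding blocked_def by blast
  then show ?thesis
  proof cases
    case (3 a w)
    then show ?thesis
      unfolding blocked_def by (cases "a = v") (auto simp: nbhd_sym)
  qed (auto simp: blocked_def nbhd_sym)
qed

lemma blocked_sym: "v \<in> blocked E u \<longleftrightarrow> u \<in> blocked E v"
  using blocked_sym_imp by metis

lemma card_common_nbhd_insert_edge_endpoint:
  assumes "sgraph V E" and "v \<notin> blocked E u" and "y \<noteq> u"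
  shows "card (nbhd (insert {u, v} E) u \<inter> nbhd (insert {u, v} E) y)
      \<le> max 1 (card (nbhd E u \<inter> nbhd E y))"
proof -
  let ?N' = "nbhd (insert {u, v} E)"
  have "u \<noteq> v" and "v \<notin> nbhd E u"
    using assms(2) unfolding blocked_def by auto
  consider "y = v" | "y \<noteq> v" "v \<in> nbhd E y" | "y \<noteq> v" "v \<notin> nbhd E y"
    by blast
  then show ?thesis
  proof cases
    case 1
    then have "?N' u \<inter> ?N' y = nbhd E u \<inter> nbhd E y"
      using \<open>u \<noteq> v\<close> sgraph_not_in_nbhd_self[OF assms(1)] by (auto simp: nbhd_insert_edge)
    then show ?thesis by simp
  next
    case 2
    have "nbhd E u \<inter> nbhd E y = {}"
    proof (rule ccontr)
      assume "nbhd E u \<inter> nbhd E y \<noteq> {}"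
      then obtain a where "a \<in> nbhd E u" "y \<in> nbhd E a"
        using nbhd_sym by fast
      then have "v \<in> blocked E u"
        using 2 assms(3) unfolding blocked_def by blast
      with assms(2) show False ..
    qed
    then have "?N' u \<inter> ?N' y = {v}"
      using 2 \<open>u \<noteq> v\<close> assms(3) by (auto simp: nbhd_insert_edge)
    then show ?thesis by simp
  next
    case 3
    then have "?N' u \<inter> ?N' y = nbhd E u \<inter> nbhd E y"
      using \<open>u \<noteq> v\<close> assms(3) by (auto simp: nbhd_insert_edge)
    then show ?thesis by simp
  qed
qed

lemma card_common_nbhd_insert_edge:
  assumes "sgraph V E" and "v \<notin> blocked E u" and "x \<noteq> y"
  shows "card (nbhd (insert {u, v} E) x \<inter> nbhd (insert {u, v} E) y)
      \<le> max 1 (card (nbhd E x \<inter> nbhd E y))"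
proof -
  let ?N' = "nbhd (insert {u, v} E)"
  have endpoint: "card (?N' a \<inter> ?N' z) \<le> max 1 (card (nbhd E a \<inter> nbhd E z))"
    if "a \<in> {u, v}" "z \<noteq> a" for a z
  proof (cases "a = u")
    case True
    then show ?thesis
      using card_common_nbhd_insert_edge_endpoint[OF assms(1,2)] that by simp
  next
    case False
    then have "a = v" "insert {u, v} E = insert {v, u} E"
      using that by (auto simp: insert_commute)
    then show ?thesis
      using card_common_nbhd_insert_edge_endpoint[OF assms(1), of u v z] assms(2) that
      by (simp add: blocked_sym)
  qed
  consider "x \<in> {u, v}" | "y \<in> {u, v}" | "x \<notin> {u, v}" "y \<notin> {u, v}"
    by blast
  then show ?thesis
  proof cases
    case 2
    then show ?thesis
      using endpoint[of y x] assms(3) by (simp add: Int_commute)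
  next
    case 3
    then show ?thesis by (simp add: nbhd_insert_edge)
  qed (use endpoint assms(3) in simp)
qed

lemma card_blocked_le:
  assumes "sgraph V E" and deg: "\<forall>x\<in>V. degree E x \<le> k"
  shows "card (blocked E u) \<le> 1 + degree E u * (1 + (k - 1) * k)"
proof -
  let ?N = "nbhd E"
  let ?U = "\<Union>a\<in>?N u. \<Union>w\<in>?N a - {u}. ?N w"
  have fin: "finite (?N x)" for x
    using sgraph_finite_nbhd[OF assms(1)] .
  have card_N: "card (?N x) \<le> k" for x
    using sgraph_degree_le[OF assms] unfolding degree_def .
  have card_paths: "card (\<Union>w\<in>?N a - {u}. ?N w) \<le> (k - 1) * k" if "a \<in> ?N u" for a
  proof -
    have "card (\<Union>w\<in>?N a - {u}. ?N w) \<le> (\<Sum>w\<in>?N a - {u}. card (?N w))"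
      using fin by (intro card_UN_le) auto
    also have "\<dots> \<le> card (?N a - {u}) * k"
      using sum_bounded_above[of "?N a - {u}" "\<lambda>w. card (?N w)" k] card_N by simp
    also have "card (?N a - {u}) = card (?N a) - 1"
      using that fin by (simp add: nbhd_sym)
    finally show ?thesis
      using card_N[of a] by (meson diff_le_mono le_trans mult_le_mono1)
  qed
  have "card (blocked E u) \<le> 1 + card (?N u \<union> ?U)"
    unfolding blocked_def using fin by (simp add: card_insert_if)
  also have "card (?N u \<union> ?U) \<le> card (?N u) + card ?U"
    by (rule card_Un_le)
  also have "card ?U \<le> (\<Sum>a\<in>?N u. card (\<Union>w\<in>?N a - {u}. ?N w))"
    using fin by (rule card_UN_le)
  also have "\<dots> \<le> card (?N u) * ((k - 1) * k)"
    using sum_bounded_above[of "?N u" _ "(k - 1) * k"] card_paths by simp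
  finally show ?thesis
    by (simp add: degree_def algebra_simps)
qed

lemma card_blocked_le_cube:
  assumes "sgraph V E" and "\<forall>x\<in>V. degree E x \<le> \<Delta> + 1" and "degree E u < \<Delta>"
  shows "card (blocked E u) \<le> \<Delta> ^ 3"
proof -
  obtain d where d: "\<Delta> = Suc d" and "degree E u \<le> d"
    using assms(3) by (cases \<Delta>) auto
  have "card (blocked E u) \<le> 1 + degree E u * (1 + \<Delta> * (\<Delta> + 1))"
    using card_blocked_le[OF assms(1,2)] by simp
  also have "\<dots> \<le> 1 + d * (1 + \<Delta> * (\<Delta> + 1))"
    using \<open>degree E u \<le> d\<close> by (intro add_left_mono mult_right_mono) auto
  also have "\<dots> = \<Delta> ^ 3"
    unfolding d by (simp add: power3_eq_cube algebra_simps)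
  finally show ?thesis .
qed

text \<open>Truncated subtraction: vertices of degree above \<Delta> contribute 0.\<close>
definition deficit :: "'a set \<Rightarrow> nat \<Rightarrow> 'a set set \<Rightarrow> nat" where
  "deficit V \<Delta> E = (\<Sum>x\<in>V. \<Delta> - degree E x)"

definition overfull :: "'a set \<Rightarrow> nat \<Rightarrow> 'a set set \<Rightarrow> 'a set" where
  "overfull V \<Delta> E = {x\<in>V. degree E x = \<Delta> + 1}"

definition admissible :: "'a set \<Rightarrow> nat \<Rightarrow> nat \<Rightarrow> 'a set set \<Rightarrow> bool" where
  "admissible V \<Delta> c E \<longleftrightarrow> sgraph V E \<and> (\<forall>x\<in>V. degree E x \<le> \<Delta> + 1)
     \<and> (\<forall>x\<in>V. \<forall>y\<in>V. x \<noteq> y \<longrightarrow> card (nbhd E x \<inter> nbhd E y) \<le> c)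
     \<and> (overfull V \<Delta> E \<noteq> {} \<longrightarrow> card (overfull V \<Delta> E) + deficit V \<Delta> E \<le> \<Delta> ^ 4)"

lemma deficit_le_card_deficient:
  assumes "finite V"
  shows "deficit V \<Delta> E \<le> \<Delta> * card {x\<in>V. degree E x < \<Delta>}"
proof -
  have "deficit V \<Delta> E = (\<Sum>x\<in>{x\<in>V. degree E x < \<Delta>}. \<Delta> - degree E x)"
    unfolding deficit_def using assms by (intro sum.mono_neutral_right) auto
  also have "\<dots> \<le> \<Delta> * card {x\<in>V. degree E x < \<Delta>}"
    using sum_bounded_above[of "{x\<in>V. degree E x < \<Delta>}" "\<lambda>x. \<Delta> - degree E x" \<Delta>]
    by (simp add: mult.commute)
  finally show ?thesis .
qed

lemma deficit_pos:
  assumes "finite V" and "u \<in> V" and "degree E u < \<Delta>"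
  shows "0 < deficit V \<Delta> E"
  using member_le_sum[of u V "\<lambda>x. \<Delta> - degree E x"] assms unfolding deficit_def by simp

lemma deficit_insert_edge_less:
  assumes "sgraph V E" and "v \<notin> blocked E u" and "u \<in> V" and "degree E u < \<Delta>"
  shows "deficit V \<Delta> (insert {u, v} E) < deficit V \<Delta> E"
proof -
  have "u \<noteq> v" and "v \<notin> nbhd E u"
    using assms(2) unfolding blocked_def by auto
  note degree' = degree_insert_edge[OF assms(1) this]
  have "finite V"
    using assms(1) unfolding sgraph_def by simp
  then show ?thesis
    unfolding deficit_def
    by (rule sum_strict_mono_ex1) (use assms degree' in \<open>auto intro!: bexI[of _ u]\<close>)
qed

lemma overfull_insert_edge_subset:
  assumes "sgraph V E" and "v \<notin> blocked E u" and "degree E u < \<Delta>"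
  shows "overfull V \<Delta> (insert {u, v} E) \<subseteq> insert v (overfull V \<Delta> E)"
proof -
  have "u \<noteq> v" and "v \<notin> nbhd E u"
    using assms(2) unfolding blocked_def by auto
  then show ?thesis
    using assms(3) unfolding overfull_def by (auto simp: degree_insert_edge[OF assms(1)])
qed

lemma admissible_insert_edge:
  assumes adm: "admissible V \<Delta> c E" and "1 \<le> c"
    and u: "u \<in> V" "degree E u < \<Delta>"
    and v: "v \<in> V" "v \<notin> blocked E u" "degree E v \<le> \<Delta>"
    and room: "degree E v < \<Delta> \<or> card (overfull V \<Delta> E) + deficit V \<Delta> E \<le> \<Delta> ^ 4"
  shows "admissible V \<Delta> c (insert {u, v} E)"
proof -
  let ?E' = "insert {u, v} E"
  have sg: "sgraph V E" and deg: "\<forall>x\<in>V. degree E x \<le> \<Delta> + 1"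
    and cod: "\<forall>x\<in>V. \<forall>y\<in>V. x \<noteq> y \<longrightarrow> card (nbhd E x \<inter> nbhd E y) \<le> c"
    and bound: "overfull V \<Delta> E \<noteq> {} \<Longrightarrow> card (overfull V \<Delta> E) + deficit V \<Delta> E \<le> \<Delta> ^ 4"
    using adm unfolding admissible_def by auto
  have "u \<noteq> v" and "v \<notin> nbhd E u"
    using v(2) unfolding blocked_def by auto
  note degree' = degree_insert_edge[OF sg this]
  have fin: "finite (overfull V \<Delta> E)"
    using sg unfolding sgraph_def overfull_def by simp
  have less: "deficit V \<Delta> ?E' < deficit V \<Delta> E"
    using deficit_insert_edge_less[OF sg v(2) u] .
  have sub: "overfull V \<Delta> ?E' \<subseteq> insert v (overfull V \<Delta> E)"
    using overfull_insert_edge_subset[OF sg v(2) u(2)] .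
  have "card (overfull V \<Delta> ?E') + deficit V \<Delta> ?E' \<le> \<Delta> ^ 4" if "overfull V \<Delta> ?E' \<noteq> {}"
  proof (cases "degree E v < \<Delta>")
    case True
    then have "overfull V \<Delta> ?E' \<subseteq> overfull V \<Delta> E"
      using sub degree' unfolding overfull_def by auto
    then have "card (overfull V \<Delta> ?E') \<le> card (overfull V \<Delta> E)"
      and "overfull V \<Delta> E \<noteq> {}"
      using card_mono[OF fin] that by auto
    then show ?thesis
      using bound less by linarith
  next
    case False
    have "card (overfull V \<Delta> ?E') \<le> card (overfull V \<Delta> E) + 1"
      using card_mono[OF _ sub] fin by (simp add: card_insert_if split: if_splits)
    then show ?thesis
      using False room less by linarith
  qed
  moreover have "\<forall>x\<in>V. \<forall>y\<in>V. x \<noteq> y \<longrightarrow> card (nbhd ?E' x \<inter> nbhd ?E' y) \<le> c"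
    using card_common_nbhd_insert_edge[OF sg v(2)] cod \<open>1 \<le> c\<close> by (meson le_trans max.boundedI)
  moreover have "\<forall>x\<in>V. degree ?E' x \<le> \<Delta> + 1"
    using deg u v by (auto simp: degree')
  ultimately show ?thesis
    unfolding admissible_def using sgraph_insert_edge[OF sg u(1) v(1) \<open>u \<noteq> v\<close>] by blast
qed

lemma exists_admissible_partner:
  assumes adm: "admissible V \<Delta> c E" and n: "2 * \<Delta> ^ 4 \<le> card V"
    and u: "u \<in> V" "degree E u < \<Delta>"
  shows "\<exists>v\<in>V. v \<notin> blocked E u \<and> degree E v \<le> \<Delta>
    \<and> (degree E v < \<Delta> \<or> card (overfull V \<Delta> E) + deficit V \<Delta> E \<le> \<Delta> ^ 4)"
proof (cases "\<exists>v\<in>V. v \<notin> blocked E u \<and> degree E v < \<Delta>")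
  case True
  then show ?thesis by fastforce
next
  case False
  have sg: "sgraph V E" and deg: "\<forall>x\<in>V. degree E x \<le> \<Delta> + 1"
    and bound: "overfull V \<Delta> E \<noteq> {} \<Longrightarrow> card (overfull V \<Delta> E) + deficit V \<Delta> E \<le> \<Delta> ^ 4"
    using adm unfolding admissible_def by auto
  have fin: "finite V" "finite (blocked E u)" "finite (overfull V \<Delta> E)"
    using sg sgraph_finite_nbhd[OF sg] unfolding sgraph_def blocked_def overfull_def by auto
  have blocked: "card (blocked E u) \<le> \<Delta> ^ 3"
    using card_blocked_le_cube[OF sg deg u(2)] .
  have "deficit V \<Delta> E \<le> \<Delta> * card {x\<in>V. degree E x < \<Delta>}"
    using deficit_le_card_deficient[OF fin(1)] .
  also have "\<dots> \<le> \<Delta> * \<Delta> ^ 3"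
  proof -
    have "{x\<in>V. degree E x < \<Delta>} \<subseteq> blocked E u"
      using False by blast
    then show ?thesis
      using card_mono[OF fin(2)] blocked by (meson le_trans mult_le_mono2)
  qed
  also have "\<dots> = \<Delta> ^ 4"
    by (simp add: power3_eq_cube power4_eq_xxxx)
  finally have room: "card (overfull V \<Delta> E) + deficit V \<Delta> E \<le> \<Delta> ^ 4"
    using bound by (cases "overfull V \<Delta> E = {}") auto
  have "\<not> V \<subseteq> blocked E u \<union> overfull V \<Delta> E"
  proof
    assume "V \<subseteq> blocked E u \<union> overfull V \<Delta> E"
    then have "card V \<le> card (blocked E u) + card (overfull V \<Delta> E)"
      using fin card_mono card_Un_le le_trans by (metis finite_UnI)
    moreover have "\<Delta> ^ 3 \<le> \<Delta> ^ 4"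
      using u(2) by (simp add: power_increasing)
    ultimately show False
      using n blocked room deficit_pos[OF fin(1) u] by linarith
  qed
  then obtain v where v: "v \<in> V" "v \<notin> blocked E u" "v \<notin> overfull V \<Delta> E"
    by blast
  then have "degree E v \<le> \<Delta>"
    using deg unfolding overfull_def by (auto simp: le_Suc_eq)
  then show ?thesis
    using v room by blast
qed

lemma admissible_completion:
  assumes "admissible V \<Delta> c E" and "1 \<le> c" and "2 * \<Delta> ^ 4 \<le> card V"
  shows "\<exists>E'. E \<subseteq> E' \<and> admissible V \<Delta> c E' \<and> (\<forall>x\<in>V. \<Delta> \<le> degree E' x)"
  using assms(1)
proof (induction "deficit V \<Delta> E" arbitrary: E rule: less_induct)
  case less
  show ?case
  proof (cases "\<forall>x\<in>V. \<Delta> \<le> degree E x")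
    case False
    then obtain u where u: "u \<in> V" "degree E u < \<Delta>"
      by (auto simp: not_le)
    then obtain v where v: "v \<in> V" "v \<notin> blocked E u" "degree E v \<le> \<Delta>"
      "degree E v < \<Delta> \<or> card (overfull V \<Delta> E) + deficit V \<Delta> E \<le> \<Delta> ^ 4"
      using exists_admissible_partner[OF less.prems assms(3)] by blast
    have "admissible V \<Delta> c (insert {u, v} E)"
      using admissible_insert_edge[OF less.prems assms(2) u v] .
    moreover have "deficit V \<Delta> (insert {u, v} E) < deficit V \<Delta> E"
      using deficit_insert_edge_less[OF _ v(2) u] less.prems unfolding admissible_def by blast
    ultimately show ?thesis
      using less.hyps by (meson subset_insertI order_trans)
  qed (use less.prems in blast)
qed

theorem lemma4p2:
  fixes V :: "'a set" and E :: "'a set set" and \<Delta> n :: nat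
  assumes "\<Delta> \<ge> 2"
    and "n \<ge> 2 * \<Delta> ^ 4"
    and "sgraph V E"
    and "card V = n"
    and "max_degree V E \<le> \<Delta>"
  shows "\<exists>E'. sgraph V E' \<and> E \<subseteq> E'
           \<and> (\<forall>v\<in>V. degree E' v \<in> {\<Delta>, \<Delta> + 1})
           \<and> max_codegree V E' \<le> max (max_codegree V E) 1"
proof -
  define c where "c = max (max_codegree V E) 1"
  have fin: "finite V"
    using assms(3) unfolding sgraph_def by simp
  have deg: "\<forall>x\<in>V. degree E x \<le> \<Delta>"
    using assms(5) max_degree_le_iff[OF fin] by blast
  then have "overfull V \<Delta> E = {}"
    unfolding overfull_def by fastforce
  moreover have "\<forall>x\<in>V. \<forall>y\<in>V. x \<noteq> y \<longrightarrow> card (nbhd E x \<inter> nbhd E y) \<le> c"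
    using max_codegree_le_iff[OF fin, of E c] unfolding c_def by simp
  ultimately have "admissible V \<Delta> c E"
    unfolding admissible_def using assms(3) deg by (simp add: le_SucI)
  then obtain E' where E': "E \<subseteq> E'" "admissible V \<Delta> c E'" "\<forall>x\<in>V. \<Delta> \<le> degree E' x"
    using admissible_completion[of V \<Delta> c E] assms(2,4) unfolding c_def by auto
  have "\<forall>v\<in>V. degree E' v \<in> {\<Delta>, \<Delta> + 1}"
  proof
    fix v assume "v \<in> V"
    then have "\<Delta> \<le> degree E' v" "degree E' v \<le> \<Delta> + 1"
      using E'(2,3) unfolding admissible_def by auto
    then show "degree E' v \<in> {\<Delta>, \<Delta> + 1}"
      by auto
  qed
  moreover have "max_codegree V E' \<le> c"
    using E'(2) max_codegree_le_iff[OF fin] unfolding admissible_def by blast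
  ultimately show ?thesis
    using E' unfolding admissible_def c_def by blast
qed

end
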